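(* Let $\alpha \in (0,1)$ and let $O_1, \dots, O_n$ be i.i.d. copies of $O = (X, Y)$ drawn from a law $P_0$ on $\mathcal{X} \times \mathbb{R}$, such that (i) for $P_{0,X}$-almost all $x \in \mathcal{X}$ the conditional $\alpha$-quantile $\psi^\alpha_{P_0}(x) := \{ y \in \mathbb{R} : P_0(Y < y \mid X = x) \ge \alpha,\ P_0(Y \ge y \mid X = x) \ge 1-\alpha \}$ is a singleton (so $\psi^\alpha_{P_0}$ is viewed as a function $\mathcal{X} \to \mathbb{R}$), and (ii) $|Y| \le C_0 < \infty$ holds $P_0$-almost surely. Let $\widehat{\psi}^\alpha_1, \dots, \widehat{\psi}^\alpha_K$ be algorithms (as defined in the context), with $K = O(n^a)$ for some $a > 0$, and assume that for every $k \in \{1,\dots,K\}$, $\widehat{\psi}^\alpha_k$ only outputs functions uniformly bounded by $C_0$. Let $\widehat{\kappa}_n$ be the discrete Super Learner selector and $\widetilde{\kappa}_n$ the oracle selector, and let $\widetilde{\psi}^\alpha_{P_0}$ denote the algorithm that always outputs $\psi^\alpha_{P_0}$. Then $$\mathbb{E}_{P_0}\Big[\widetilde{R}^\alpha_{n,P_0}(\widehat{\psi}^\alpha_{\widehat{\kappa}_n}) - \widetilde{R}^\alpha_{n,P_0}(\widetilde{\psi}^\alpha_{P_0})\Big] \le \mathbb{E}_{P_0}\Big[\widetilde{R}^\alpha_{n,P_0}(\widehat{\psi}^\alpha_{\widetilde{\kappa}_n}) - \widetilde{R}^\alpha_{n,P_0}(\widetilde{\psi}^\alpha_{P_0})\Big]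 + O\!\left(\frac{\log n}{n^{1/2}}\right).$$
   Context: Let $\Psi$ be the set of measurable functions $\mathcal{X} \to \mathbb{R}$. The quantile (pinball) loss of $\psi \in \Psi$ is $L^\alpha(\psi)(x,y) := \alpha|y - \psi(x)|$ if $y > \psi(x)$ and $(1-\alpha)|y-\psi(x)|$ if $y \le \psi(x)$. For a probability measure $P$ and a function $f$, write $Pf := \int f\, dP$. An algorithm is a map sending any finite set $\{o_1,\dots,o_M\} \subset \mathcal{X}\times\mathbb{R}$, viewed as the empirical measure $M^{-1}\sum_{m} \mathrm{Dirac}(o_m)$, to an element of $\Psi$. Cross-validation scheme: $B_n \in \{0,1\}^n$ is a random vector drawn independently of $O_1,\dots,O_n$ with $\sum_{i=1}^n B_n(i) \approx np$ for a fixed user-supplied proportion $p$ (e.g. $V$-fold cross-validation: $B_n$ uniform on $\{b_1,\dots,b_V\}$ with $\sum_i b_v(i) \approx n/V$ and $\sum_v b_v(i) = 1$ for each $i$). Observation $O_i$ is in the training set if $B_n(i)=0$ and in the test set if $B_n(i)=1$; $P^0_{n,B_n}$ and $P^1_{n,B_n}$ denote the empirical distributions of the training and test sets. The oracle cross-validated risk of an algorithm $\widehat{\psi}$ is $\widetilde{R}^\alpha_{n,P_0}(\widehat{\psi}) := \mathbb{E}_{B_n}[P_0 L^\alpha(\widehat{\psi}(P^0_{n,B_n}))]$ (in particular $\widetilde{R}^\alpha_{n,P_0}(\widetilde{\psi}^\alpha_{P_0}) = P_0 L^\alpha(\psi^\alpha_{P_0})$), and its empirical cross-validated risk is $\widehat{R}^\alpha_n(\widehat{\psi})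 := \mathbb{E}_{B_n}[P^1_{n,B_n} L^\alpha(\widehat{\psi}(P^0_{n,B_n}))]$. The discrete Super Learner selector is $\widehat{\kappa}_n \in \arg\min_{k \in \{1,\dots,K\}} \widehat{R}^\alpha_n(\widehat{\psi}^\alpha_k)$ and the oracle selector is $\widetilde{\kappa}_n \in \arg\min_{k \in \{1,\dots,K\}} \widetilde{R}^\alpha_{n,P_0}(\widehat{\psi}^\alpha_k)$. *)

theory Defs
  imports "HOL-Probability.Probability" "HOL-Library.Landau_Symbols" "HOL-Library.Multiset"
begin

definition pinball :: "real \<Rightarrow> ('x \<Rightarrow> real) \<Rightarrow> 'x \<times> real \<Rightarrow> real" where
  "pinball \<alpha> \<psi> = (\<lambda>(x, y). if y > \<psi> x then \<alpha> * \<bar>y - \<psi> x\<bar> else (1 - \<alpha>) * \<bar>y - \<psi> x\<bar>)"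

definition quantile_set :: "real \<Rightarrow> real measure \<Rightarrow> real set" where
  "quantile_set \<alpha> Q = {y. measure Q {..<y} \<ge> \<alpha> \<and> measure Q {y..} \<ge> 1 - \<alpha>}"

text \<open>Training sample (as a multiset, i.e. empirical measure) for test index set S.\<close>
definition train_ms :: "nat \<Rightarrow> (nat \<Rightarrow> 'o) \<Rightarrow> nat set \<Rightarrow> 'o multiset" where
  "train_ms n d S = image_mset d (mset_set ({..<n} - S))"

text \<open>Oracle cross-validated risk of an algorithm on the data d (B is the law of the test set).\<close>
definition oracle_cv_risk ::
  "('x \<times> real) measure \<Rightarrow> real \<Rightarrow> nat set pmf \<Rightarrow> nat
     \<Rightarrow> (('x \<times> real) multiset \<Rightarrow> 'x \<Rightarrow> real) \<Rightarrow> (nat \<Rightarrow> 'x \<times> real) \<Rightarrow> real" where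
  "oracle_cv_risk P0 \<alpha> B n alg d =
     measure_pmf.expectation B (\<lambda>S. \<integral>z. pinball \<alpha> (alg (train_ms n d S)) z \<partial>P0)"

definition emp_cv_risk ::
  "real \<Rightarrow> nat set pmf \<Rightarrow> nat
     \<Rightarrow> (('x \<times> real) multiset \<Rightarrow> 'x \<Rightarrow> real) \<Rightarrow> (nat \<Rightarrow> 'x \<times> real) \<Rightarrow> real" where
  "emp_cv_risk \<alpha> B n alg d =
     measure_pmf.expectation B
       (\<lambda>S. (\<Sum>i\<in>S. pinball \<alpha> (alg (train_ms n d S)) (d i)) / real (card S))"

end

theory Submission
  imports Defs "HOL-Real_Asymp.Real_Asymp"
begin

(* Fix a split S of the sample. Conditionally on the training part, the empirical risk of each
   algorithm on the test part is an average of card S >= p n - 1 i.i.d. losses with values in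
   [0, 2 C0], so by Hoeffding's inequality it deviates from the oracle risk by at least t with
   probability at most 2 exp (-2 (p n - 1) t^2 / (2 C0 + 1)^2).  A union bound over the K
   algorithms bounds the expected maximal deviation by t + (2 C0 + 1) K 2 exp (...), and the
   choice t ~ sqrt (log (K n) / (p n)) makes this O(log n / sqrt n) since K grows polynomially.
   As the Super Learner minimises the empirical risk, its oracle risk exceeds that of any other
   selector by at most twice the maximal deviation.  Neither are the hypotheses on the conditional quantile: the risk of psi0 enters
   both sides equally. *)

lemma indep_vars_PiM_components:
  assumes "prob_space M" and "finite I" and "I \<noteq> {}"
  shows "prob_space.indep_vars (PiM I (\<lambda>_. M)) (\<lambda>_. M) (\<lambda>i x. x i) I"
proof -
  interpret prob_space "PiM I (\<lambda>_. M)" by (intro prob_space_PiM assms(1))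
  have "distr (PiM I (\<lambda>_. M)) (PiM I (\<lambda>_. M)) (\<lambda>x. \<lambda>i\<in>I. x i) = PiM I (\<lambda>_. M)"
    by (subst distr_cong[where g = "\<lambda>x. x"]) (auto simp: space_PiM)
  also have "\<dots> = PiM I (\<lambda>i. distr (PiM I (\<lambda>_. M)) M (\<lambda>x. x i))"
    by (intro PiM_cong refl distr_PiM_component[symmetric]) (auto simp: assms(1))
  finally show ?thesis
    by (subst indep_vars_iff_distr_eq_PiM'[OF assms(3)]) auto
qed

lemma distr_PiM_component_comp:
  assumes "prob_space M" and "i \<in> I" and [measurable]: "g \<in> borel_measurable M"
  shows "distr (PiM I (\<lambda>_. M)) borel (\<lambda>x. g (x i)) = distr M borel g"
proof -
  have "distr (PiM I (\<lambda>_. M)) borel (\<lambda>x. g (x i)) = distr (distr (PiM I (\<lambda>_. M)) M (\<lambda>x. x i)) borel g"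
    using assms(2) by (subst distr_distr) (auto simp: comp_def)
  also have "\<dots> = distr M borel g"
    using assms by (subst distr_PiM_component) auto
  finally show ?thesis .
qed

lemma Hoeffding_PiM_abs_ge:
  fixes g :: "'a \<Rightarrow> real"
  assumes M: "prob_space M" and "finite I" and "I \<noteq> {}"
    and g[measurable]: "g \<in> borel_measurable M" and g_bounded: "AE z in M. g z \<in> {0..b}"
    and "0 < b" and "0 \<le> \<epsilon>"
  shows "measure (PiM I (\<lambda>_. M)) {x \<in> space (PiM I (\<lambda>_. M)).
            \<epsilon> \<le> \<bar>(\<Sum>i\<in>I. g (x i)) / card I - (\<integral>z. g z \<partial>M)\<bar>}
          \<le> 2 * exp (-2 * real (card I) * \<epsilon>\<^sup>2 / b\<^sup>2)"
proof -
  obtain i0 where i0: "i0 \<in> I" using \<open>I \<noteq> {}\<close> by auto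
  interpret prob_space "PiM I (\<lambda>_. M)" by (intro prob_space_PiM M)
  interpret Hoeffding_ineq_iid "PiM I (\<lambda>_. M)" I "\<lambda>i x. g (x i)" "\<lambda>x. g (x i0)" 0 b
    "expectation (\<lambda>x. g (x i0))"
  proof unfold_locales
    show "finite I" by fact
    show "indep_vars (\<lambda>_. borel) (\<lambda>i x. g (x i)) I"
      by (rule indep_vars_compose2[OF indep_vars_PiM_components[OF assms(1-3)]]) auto
    show "distr (PiM I (\<lambda>_. M)) borel (\<lambda>x. g (x i)) = distr (PiM I (\<lambda>_. M)) borel (\<lambda>x. g (x i0))"
      if "i \<in> I" for i
      using that i0 by (simp add: distr_PiM_component_comp[OF M])
    show "random_variable borel (\<lambda>x. g (x i0))" using i0 by measurable
    show "AE x in PiM I (\<lambda>_. M). g (x i0) \<in> {0..b}"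
      by (rule AE_PiM_component[OF _ i0 g_bounded]) (rule M)
  qed
  have "expectation (\<lambda>x. g (x i0)) = (\<integral>z. g z \<partial>M)"
  proof -
    have "expectation (\<lambda>x. g (x i0)) = (\<integral>z. g z \<partial>distr (PiM I (\<lambda>_. M)) M (\<lambda>x. x i0))"
      by (rule integral_distr[symmetric, OF measurable_component_singleton[OF i0] g])
    also have "\<dots> = (\<integral>z. g z \<partial>M)"
      by (subst distr_PiM_component[of I "\<lambda>_. M" i0]) (auto simp: M i0)
    finally show ?thesis .
  qed
  then show ?thesis
    using Hoeffding_ineq_abs_ge'[OF \<open>0 \<le> \<epsilon>\<close> \<open>0 < b\<close> \<open>I \<noteq> {}\<close>] by (simp only: diff_zero)
qed

lemma borel_measurable_restrict_app:
  fixes g :: "('i \<Rightarrow> 'a) \<Rightarrow> 'a \<Rightarrow> real"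
  assumes "T \<subseteq> I" and "i \<in> I"
    and g: "(\<lambda>(x, z). g x z) \<in> borel_measurable (PiM T (\<lambda>_. M) \<Otimes>\<^sub>M M)"
  shows "(\<lambda>d. g (restrict d T) (d i)) \<in> borel_measurable (PiM I (\<lambda>_. M))"
proof -
  have "(\<lambda>d. (restrict d T, d i)) \<in> measurable (PiM I (\<lambda>_. M)) (PiM T (\<lambda>_. M) \<Otimes>\<^sub>M M)"
    using assms(1,2) by (intro measurable_Pair measurable_restrict_subset measurable_component_singleton)
  from measurable_comp[OF this g] show ?thesis by (simp add: comp_def)
qed

lemma borel_measurable_integral_restrict:
  fixes g :: "('i \<Rightarrow> 'a) \<Rightarrow> 'a \<Rightarrow> real"
  assumes "prob_space M" and "T \<subseteq> I"
    and g: "(\<lambda>(x, z). g x z) \<in> borel_measurable (PiM T (\<lambda>_. M) \<Otimes>\<^sub>M M)"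
  shows "(\<lambda>d. \<integral>z. g (restrict d T) z \<partial>M) \<in> borel_measurable (PiM I (\<lambda>_. M))"
proof (rule sigma_finite_measure.borel_measurable_lebesgue_integral)
  show "sigma_finite_measure M" by (rule prob_space_imp_sigma_finite[OF assms(1)])
  have "(\<lambda>w. (restrict (fst w) T, snd w)) \<in> measurable (PiM I (\<lambda>_. M) \<Otimes>\<^sub>M M) (PiM T (\<lambda>_. M) \<Otimes>\<^sub>M M)"
    using assms(2) by (intro measurable_Pair measurable_compose[OF measurable_fst measurable_restrict_subset] measurable_snd)
  from measurable_comp[OF this g]
  show "(\<lambda>(d, z). g (restrict d T) z) \<in> borel_measurable (PiM I (\<lambda>_. M) \<Otimes>\<^sub>M M)"
    by (simp add: comp_def split_beta')
qed

lemma emeasure_PiM_union_le_slices: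
  assumes M: "prob_space M" and "finite T" and "finite S" and "T \<inter> S = {}"
    and A: "A \<in> sets (PiM (T \<union> S) (\<lambda>_. M))"
    and slices: "\<And>x. x \<in> space (PiM T (\<lambda>_. M)) \<Longrightarrow>
          emeasure (PiM S (\<lambda>_. M)) {y \<in> space (PiM S (\<lambda>_. M)). merge T S (x, y) \<in> A} \<le> c"
  shows "emeasure (PiM (T \<union> S) (\<lambda>_. M)) A \<le> c"
proof -
  let ?PT = "PiM T (\<lambda>_. M)" and ?PS = "PiM S (\<lambda>_. M)"
  interpret product_sigma_finite "\<lambda>_::'i. M"
    by (simp add: product_sigma_finite_def prob_space_imp_sigma_finite M)
  interpret PS: prob_space ?PS by (intro prob_space_PiM M)
  interpret PT: prob_space ?PT by (intro prob_space_PiM M)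
  have "emeasure (PiM (T \<union> S) (\<lambda>_. M)) A = emeasure (distr (?PT \<Otimes>\<^sub>M ?PS) (PiM (T \<union> S) (\<lambda>_. M)) (merge T S)) A"
    by (simp only: distr_merge[OF \<open>T \<inter> S = {}\<close> \<open>finite T\<close> \<open>finite S\<close>])
  also have "\<dots> = emeasure (?PT \<Otimes>\<^sub>M ?PS) (merge T S -` A \<inter> space (?PT \<Otimes>\<^sub>M ?PS))"
    by (rule emeasure_distr[OF measurable_merge A])
  also have "\<dots> = (\<integral>\<^sup>+x. emeasure ?PS (Pair x -` (merge T S -` A \<inter> space (?PT \<Otimes>\<^sub>M ?PS))) \<partial>?PT)"
    by (rule PS.emeasure_pair_measure_alt) (rule measurable_sets[OF measurable_merge A])
  also have "\<dots> \<le> (\<integral>\<^sup>+x. c \<partial>?PT)"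
  proof (rule nn_integral_mono)
    fix x assume "x \<in> space ?PT"
    then show "emeasure ?PS (Pair x -` (merge T S -` A \<inter> space (?PT \<Otimes>\<^sub>M ?PS))) \<le> c"
      using slices[of x] by (simp add: space_pair_measure vimage_def Int_def conj_commute)
  qed
  also have "\<dots> = c"
    by (simp add: PT.emeasure_space_1)
  finally show ?thesis .
qed

lemma Hoeffding_PiM_conditional:
  fixes g :: "('i \<Rightarrow> 'a) \<Rightarrow> 'a \<Rightarrow> real"
  assumes M: "prob_space M" and "finite T" and "finite S" and "T \<inter> S = {}"
    and g: "(\<lambda>(x, z). g x z) \<in> borel_measurable (PiM T (\<lambda>_. M) \<Otimes>\<^sub>M M)"
    and g_bounded: "\<And>x. x \<in> space (PiM T (\<lambda>_. M)) \<Longrightarrow> AE z in M. g x z \<in> {0..b}"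
    and "0 < b" and "0 \<le> \<epsilon>"
  shows "measure (PiM (T \<union> S) (\<lambda>_. M)) {d \<in> space (PiM (T \<union> S) (\<lambda>_. M)).
            \<epsilon> \<le> \<bar>(\<Sum>i\<in>S. g (restrict d T) (d i)) / card S - (\<integral>z. g (restrict d T) z \<partial>M)\<bar>}
          \<le> 2 * exp (-2 * real (card S) * \<epsilon>\<^sup>2 / b\<^sup>2)"
    (is "measure ?PTS ?A \<le> ?bound")
proof (cases "S = {}")
  case True
  interpret prob_space ?PTS by (intro prob_space_PiM M)
  have "measure ?PTS ?A \<le> 1" by (rule prob_le_1)
  then show ?thesis using True by simp
next
  case False
  let ?PT = "PiM T (\<lambda>_. M)" and ?PS = "PiM S (\<lambda>_. M)"
  interpret PS: prob_space ?PS by (intro prob_space_PiM M)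
  interpret PTS: prob_space ?PTS by (intro prob_space_PiM M)
  have "emeasure ?PTS ?A \<le> ennreal ?bound"
  proof (rule emeasure_PiM_union_le_slices[OF M \<open>finite T\<close> \<open>finite S\<close> \<open>T \<inter> S = {}\<close>])
    show "?A \<in> sets ?PTS"
      using borel_measurable_restrict_app[OF _ _ g] borel_measurable_integral_restrict[OF M _ g]
      by measurable
    fix x assume x: "x \<in> space ?PT"
    have restrict_merge_T: "restrict (merge T S (x, y)) T = x" for y
      using x \<open>T \<inter> S = {}\<close> by (auto simp: restrict_merge space_PiM PiE_def extensional_restrict)
    have merge_S: "merge T S (x, y) i = y i" if "i \<in> S" for i y
      using that \<open>T \<inter> S = {}\<close> by (auto simp: merge_def)
    have "(\<Sum>i\<in>S. g (restrict (merge T S (x, y)) T) (merge T S (x, y) i)) = (\<Sum>i\<in>S. g x (y i))" for y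
      by (intro sum.cong) (simp_all only: restrict_merge_T merge_S)
    moreover have "merge T S (x, y) \<in> space ?PTS" if "y \<in> space ?PS" for y
      using measurable_space[OF measurable_merge, of "(x, y)"] x that by (simp add: space_pair_measure)
    ultimately have slice: "{y \<in> space ?PS. merge T S (x, y) \<in> ?A}
        = {y \<in> space ?PS. \<epsilon> \<le> \<bar>(\<Sum>i\<in>S. g x (y i)) / card S - (\<integral>z. g x z \<partial>M)\<bar>}"
      by (auto simp: restrict_merge_T)
    have "g x \<in> borel_measurable M"
      using measurable_Pair2[OF g x] by simp
    then show "emeasure ?PS {y \<in> space ?PS. merge T S (x, y) \<in> ?A} \<le> ennreal ?bound"
      unfolding slice PS.emeasure_eq_measure
      by (intro ennreal_leI Hoeffding_PiM_abs_ge[OF M \<open>finite S\<close> False _ g_bounded[OF x] \<open>0 < b\<close> \<open>0 \<le> \<epsilon>\<close>])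
  qed
  then show ?thesis
    by (simp add: PTS.emeasure_eq_measure)
qed

lemma Max_abs_le_threshold:
  fixes a :: "'k \<Rightarrow> real"
  assumes "finite Ks" and "Ks \<noteq> {}" and "\<forall>k\<in>Ks. \<bar>a k\<bar> \<le> b" and "0 \<le> t"
  shows "Max ((\<lambda>k. \<bar>a k\<bar>) ` Ks) \<le> t + b * (\<Sum>k\<in>Ks. of_bool (t \<le> \<bar>a k\<bar>))"
proof -
  have "Max ((\<lambda>k. \<bar>a k\<bar>) ` Ks) \<in> (\<lambda>k. \<bar>a k\<bar>) ` Ks"
    using assms(1,2) by (intro Max_in) auto
  then obtain k0 where k0: "k0 \<in> Ks" "Max ((\<lambda>k. \<bar>a k\<bar>) ` Ks) = \<bar>a k0\<bar>"
    by auto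
  have "0 \<le> b" using assms(3) k0(1) by force
  show ?thesis
  proof (cases "t \<le> \<bar>a k0\<bar>")
    case True
    then have "1 \<le> (\<Sum>k\<in>Ks. of_bool (t \<le> \<bar>a k\<bar>) :: real)"
      using member_le_sum[of k0 Ks "\<lambda>k. of_bool (t \<le> \<bar>a k\<bar>) :: real"] k0(1) assms(1) by auto
    then have "b \<le> b * (\<Sum>k\<in>Ks. of_bool (t \<le> \<bar>a k\<bar>))"
      using \<open>0 \<le> b\<close> by (metis mult.right_neutral mult_left_mono)
    then show ?thesis using k0 assms(3,4) by fastforce
  next
    case False
    have "0 \<le> b * (\<Sum>k\<in>Ks. of_bool (t \<le> \<bar>a k\<bar>))"
      using \<open>0 \<le> b\<close> by (intro mult_nonneg_nonneg sum_nonneg) auto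
    then show ?thesis using False k0(2) by linarith
  qed
qed

lemma integrable_Max_abs:
  fixes A :: "'k \<Rightarrow> 'a \<Rightarrow> real"
  assumes "finite_measure M" and "finite Ks" and "Ks \<noteq> {}"
    and "\<And>k. k \<in> Ks \<Longrightarrow> A k \<in> borel_measurable M"
    and A_bounded: "AE d in M. \<forall>k\<in>Ks. \<bar>A k d\<bar> \<le> b"
  shows "integrable M (\<lambda>d. Max ((\<lambda>k. \<bar>A k d\<bar>) ` Ks))"
proof (rule finite_measure.integrable_const_bound[OF assms(1)])
  show "(\<lambda>d. Max ((\<lambda>k. \<bar>A k d\<bar>) ` Ks)) \<in> borel_measurable M"
    using assms(2,4) by (intro borel_measurable_Max) auto
  show "AE d in M. norm (Max ((\<lambda>k. \<bar>A k d\<bar>) ` Ks)) \<le> b"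
    using A_bounded
  proof eventually_elim
    case (elim d)
    moreover have "Max ((\<lambda>k. \<bar>A k d\<bar>) ` Ks) \<in> (\<lambda>k. \<bar>A k d\<bar>) ` Ks"
      using assms(2,3) by (intro Max_in) auto
    ultimately show ?case by auto
  qed
qed

lemma integral_Max_abs_le:
  fixes A :: "'k \<Rightarrow> 'a \<Rightarrow> real"
  assumes M: "prob_space M" and "finite Ks" and "Ks \<noteq> {}"
    and A[measurable]: "\<And>k. k \<in> Ks \<Longrightarrow> A k \<in> borel_measurable M"
    and A_bounded: "AE d in M. \<forall>k\<in>Ks. \<bar>A k d\<bar> \<le> b" and "0 \<le> t"
  shows "(\<integral>d. Max ((\<lambda>k. \<bar>A k d\<bar>) ` Ks) \<partial>M) \<le> t + b * (\<Sum>k\<in>Ks. measure M {d \<in> space M. t \<le> \<bar>A k d\<bar>})"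
proof -
  interpret prob_space M by (rule M)
  let ?B = "\<lambda>k. {d \<in> space M. t \<le> \<bar>A k d\<bar>}"
  have B: "?B k \<in> sets M" if "k \<in> Ks" for k
    using A[OF that] by measurable
  have sum_int: "integrable M (\<lambda>d. \<Sum>k\<in>Ks. indicator (?B k) d :: real)"
    using B by (intro Bochner_Integration.integrable_sum integrable_real_indicator) (auto simp: emeasure_eq_measure)
  have "(\<integral>d. Max ((\<lambda>k. \<bar>A k d\<bar>) ` Ks) \<partial>M) \<le> (\<integral>d. t + b * (\<Sum>k\<in>Ks. indicator (?B k) d) \<partial>M)"
  proof (rule integral_mono_AE)
    show "integrable M (\<lambda>d. Max ((\<lambda>k. \<bar>A k d\<bar>) ` Ks))"
      by (rule integrable_Max_abs[OF finite_measure_axioms assms(2,3) A A_bounded])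
    show "integrable M (\<lambda>d. t + b * (\<Sum>k\<in>Ks. indicator (?B k) d))"
      using sum_int by auto
    show "AE d in M. Max ((\<lambda>k. \<bar>A k d\<bar>) ` Ks) \<le> t + b * (\<Sum>k\<in>Ks. indicator (?B k) d)"
      using A_bounded AE_space by eventually_elim
        (use Max_abs_le_threshold[OF assms(2,3) _ \<open>0 \<le> t\<close>] in \<open>simp add: indicator_def of_bool_def\<close>)
  qed
  also have "\<dots> = t + b * (\<Sum>k\<in>Ks. measure M (?B k))"
    using sum_int B
    by (simp add: prob_space Bochner_Integration.integral_sum integrable_real_indicator emeasure_eq_measure)
  finally show ?thesis .
qed

lemma average_in_interval:
  fixes f :: "'i \<Rightarrow> real"
  assumes "\<forall>i\<in>S. f i \<in> {0..b}" and "0 \<le> b"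
  shows "(\<Sum>i\<in>S. f i) / card S \<in> {0..b}"
proof (cases "card S = 0")
  case False
  have "(\<Sum>i\<in>S. f i) \<le> card S * b"
    using sum_mono[of S f "\<lambda>_. b"] assms(1) by auto
  moreover have "0 \<le> (\<Sum>i\<in>S. f i)"
    using assms(1) by (intro sum_nonneg) auto
  ultimately show ?thesis
    using False by (auto simp: field_simps)
qed (use assms(2) in simp)

lemma integral_in_interval:
  fixes f :: "'a \<Rightarrow> real"
  assumes "prob_space M" and "AE z in M. f z \<in> {0..b}" and "0 \<le> b"
  shows "(\<integral>z. f z \<partial>M) \<in> {0..b}"
proof (cases "integrable M f")
  case True
  interpret prob_space M by fact
  show ?thesis
    using assms(2) by (auto intro!: integral_ge_const integral_le_const True elim!: eventually_mono)
qed (simp add: not_integrable_integral_eq \<open>0 \<le> b\<close>)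

(* (P^1_{n,S} - P_0) g(P^0_{n,S}) in the paper's notation, for the split with test set S:
   g x is the loss of the predictor trained on the coordinates of x in I - S. *)
definition test_deviation ::
  "'a measure \<Rightarrow> 'i set \<Rightarrow> 'i set \<Rightarrow> (('i \<Rightarrow> 'a) \<Rightarrow> 'a \<Rightarrow> real) \<Rightarrow> ('i \<Rightarrow> 'a) \<Rightarrow> real" where
  "test_deviation M I S g d =
     (\<Sum>i\<in>S. g (restrict d (I - S)) (d i)) / card S - (\<integral>z. g (restrict d (I - S)) z \<partial>M)"

lemma borel_measurable_test_deviation:
  fixes g :: "('i \<Rightarrow> 'a) \<Rightarrow> 'a \<Rightarrow> real"
  assumes "prob_space M" and "S \<subseteq> I"
    and g: "(\<lambda>(x, z). g x z) \<in> borel_measurable (PiM (I - S) (\<lambda>_. M) \<Otimes>\<^sub>M M)"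
  shows "test_deviation M I S g \<in> borel_measurable (PiM I (\<lambda>_. M))"
  unfolding test_deviation_def[abs_def]
  using borel_measurable_restrict_app[OF _ _ g] borel_measurable_integral_restrict[OF assms(1) _ g] assms(2)
  by (intro borel_measurable_diff borel_measurable_divide borel_measurable_sum) auto

lemma AE_test_deviation_bounded:
  fixes g :: "('i \<Rightarrow> 'a) \<Rightarrow> 'a \<Rightarrow> real"
  assumes M: "prob_space M" and "finite I" and "S \<subseteq> I"
    and Q: "AE z in M. Q z" and g_bounded: "\<And>x z. Q z \<Longrightarrow> g x z \<in> {0..b}" and "0 \<le> b"
  shows "AE d in PiM I (\<lambda>_. M). \<bar>test_deviation M I S g d\<bar> \<le> b"
proof -
  have risk: "(\<integral>z. g x z \<partial>M) \<in> {0..b}" for x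
    using Q g_bounded by (intro integral_in_interval[OF M _ \<open>0 \<le> b\<close>]) (auto elim!: eventually_mono)
  have "AE d in PiM I (\<lambda>_. M). \<forall>i\<in>I. Q (d i)"
    using \<open>finite I\<close> by (intro eventually_ball_finite ballI AE_PiM_component[OF M _ Q])
  then show ?thesis
  proof eventually_elim
    case (elim d)
    then have "(\<Sum>i\<in>S. g (restrict d (I - S)) (d i)) / card S \<in> {0..b}"
      using \<open>S \<subseteq> I\<close> g_bounded \<open>0 \<le> b\<close> by (intro average_in_interval) auto
    with risk[of "restrict d (I - S)"] show ?case
      unfolding test_deviation_def atLeastAtMost_iff by linarith
  qed
qed

lemma measure_test_deviation_ge:
  fixes g :: "('i \<Rightarrow> 'a) \<Rightarrow> 'a \<Rightarrow> real" and m :: real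
  assumes M: "prob_space M" and "finite I" and "S \<subseteq> I"
    and g: "(\<lambda>(x, z). g x z) \<in> borel_measurable (PiM (I - S) (\<lambda>_. M) \<Otimes>\<^sub>M M)"
    and Q: "AE z in M. Q z" and g_bounded: "\<And>x z. Q z \<Longrightarrow> g x z \<in> {0..b}"
    and "0 < b" and "0 \<le> t" and "m \<le> card S"
  shows "measure (PiM I (\<lambda>_. M)) {d \<in> space (PiM I (\<lambda>_. M)). t \<le> \<bar>test_deviation M I S g d\<bar>}
      \<le> 2 * exp (-2 * m * t\<^sup>2 / b\<^sup>2)"
proof -
  have "(I - S) \<inter> S = {}"
    by blast
  then have "measure (PiM ((I - S) \<union> S) (\<lambda>_. M)) {d \<in> space (PiM ((I - S) \<union> S) (\<lambda>_. M)).
        t \<le> \<bar>(\<Sum>i\<in>S. g (restrict d (I - S)) (d i)) / card S - (\<integral>z. g (restrict d (I - S)) z \<partial>M)\<bar>}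
      \<le> 2 * exp (-2 * real (card S) * t\<^sup>2 / b\<^sup>2)"
    using Q g_bounded \<open>finite I\<close> finite_subset[OF \<open>S \<subseteq> I\<close>]
    by (intro Hoeffding_PiM_conditional[OF M _ _ _ g _ \<open>0 < b\<close> \<open>0 \<le> t\<close>]) (auto elim!: eventually_mono)
  moreover have "(I - S) \<union> S = I"
    using \<open>S \<subseteq> I\<close> by blast
  ultimately have "measure (PiM I (\<lambda>_. M)) {d \<in> space (PiM I (\<lambda>_. M)). t \<le> \<bar>test_deviation M I S g d\<bar>}
      \<le> 2 * exp (-2 * real (card S) * t\<^sup>2 / b\<^sup>2)"
    unfolding test_deviation_def by simp
  also have "\<dots> \<le> 2 * exp (-2 * m * t\<^sup>2 / b\<^sup>2)"
    using \<open>m \<le> card S\<close> by (simp add: divide_right_mono mult_right_mono)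
  finally show ?thesis .
qed

lemma integrable_Max_test_deviation:
  fixes g :: "'k \<Rightarrow> ('i \<Rightarrow> 'a) \<Rightarrow> 'a \<Rightarrow> real"
  assumes M: "prob_space M" and "finite I" and "S \<subseteq> I" and "finite Ks" and "Ks \<noteq> {}"
    and g: "\<And>k. k \<in> Ks \<Longrightarrow> (\<lambda>(x, z). g k x z) \<in> borel_measurable (PiM (I - S) (\<lambda>_. M) \<Otimes>\<^sub>M M)"
    and Q: "AE z in M. Q z" and g_bounded: "\<And>k x z. k \<in> Ks \<Longrightarrow> Q z \<Longrightarrow> g k x z \<in> {0..b}"
    and "0 \<le> b"
  shows "integrable (PiM I (\<lambda>_. M)) (\<lambda>d. Max ((\<lambda>k. \<bar>test_deviation M I S (g k) d\<bar>) ` Ks))"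
  using \<open>finite Ks\<close> AE_test_deviation_bounded[OF M \<open>finite I\<close> \<open>S \<subseteq> I\<close> Q g_bounded \<open>0 \<le> b\<close>]
  by (intro integrable_Max_abs[OF prob_space.finite_measure[OF prob_space_PiM[OF M]] \<open>finite Ks\<close> \<open>Ks \<noteq> {}\<close>]
      borel_measurable_test_deviation[OF M \<open>S \<subseteq> I\<close> g] eventually_ball_finite) auto

lemma integral_Max_test_deviation_le:
  fixes g :: "'k \<Rightarrow> ('i \<Rightarrow> 'a) \<Rightarrow> 'a \<Rightarrow> real" and m :: real
  assumes M: "prob_space M" and "finite I" and "S \<subseteq> I" and "finite Ks" and "Ks \<noteq> {}"
    and g: "\<And>k. k \<in> Ks \<Longrightarrow> (\<lambda>(x, z). g k x z) \<in> borel_measurable (PiM (I - S) (\<lambda>_. M) \<Otimes>\<^sub>M M)"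
    and Q: "AE z in M. Q z" and g_bounded: "\<And>k x z. k \<in> Ks \<Longrightarrow> Q z \<Longrightarrow> g k x z \<in> {0..b}"
    and "0 < b" and "0 \<le> t" and "m \<le> card S"
  shows "(\<integral>d. Max ((\<lambda>k. \<bar>test_deviation M I S (g k) d\<bar>) ` Ks) \<partial>PiM I (\<lambda>_. M))
      \<le> t + b * card Ks * (2 * exp (-2 * m * t\<^sup>2 / b\<^sup>2))"
proof -
  let ?PI = "PiM I (\<lambda>_. M)"
  have "AE d in ?PI. \<forall>k\<in>Ks. \<bar>test_deviation M I S (g k) d\<bar> \<le> b"
    using \<open>finite Ks\<close> AE_test_deviation_bounded[OF M \<open>finite I\<close> \<open>S \<subseteq> I\<close> Q g_bounded] \<open>0 < b\<close>
    by (intro eventually_ball_finite) auto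
  then have "(\<integral>d. Max ((\<lambda>k. \<bar>test_deviation M I S (g k) d\<bar>) ` Ks) \<partial>?PI)
      \<le> t + b * (\<Sum>k\<in>Ks. measure ?PI {d \<in> space ?PI. t \<le> \<bar>test_deviation M I S (g k) d\<bar>})"
    using borel_measurable_test_deviation[OF M \<open>S \<subseteq> I\<close> g]
    by (intro integral_Max_abs_le[OF prob_space_PiM[OF M] \<open>finite Ks\<close> \<open>Ks \<noteq> {}\<close> _ _ \<open>0 \<le> t\<close>])
  also have "\<dots> \<le> t + b * (\<Sum>k\<in>Ks. 2 * exp (-2 * m * t\<^sup>2 / b\<^sup>2))"
    using measure_test_deviation_ge[OF M \<open>finite I\<close> \<open>S \<subseteq> I\<close> g Q g_bounded \<open>0 < b\<close> \<open>0 \<le> t\<close> \<open>m \<le> card S\<close>]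
      \<open>0 < b\<close> by (intro add_left_mono mult_left_mono sum_mono) auto
  finally show ?thesis
    by simp
qed

lemma integral_risk_of_empirical_minimizer_le:
  fixes R Rh :: "'k \<Rightarrow> 'a \<Rightarrow> real" and kh kt :: "'a \<Rightarrow> 'k"
  assumes "integrable M (\<lambda>d. R (kh d) d)" and "integrable M (\<lambda>d. R (kt d) d)" and "integrable M D"
    and range: "\<And>d. d \<in> space M \<Longrightarrow> kh d \<in> Ks \<and> kt d \<in> Ks"
    and minimizer: "\<And>d k. d \<in> space M \<Longrightarrow> k \<in> Ks \<Longrightarrow> Rh (kh d) d \<le> Rh k d"
    and deviation: "\<And>k d. k \<in> Ks \<Longrightarrow> d \<in> space M \<Longrightarrow> \<bar>Rh k d - R k d\<bar> \<le> D d"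
  shows "(\<integral>d. R (kh d) d \<partial>M) \<le> (\<integral>d. R (kt d) d \<partial>M) + 2 * (\<integral>d. D d \<partial>M)"
proof -
  have "(\<integral>d. R (kh d) d \<partial>M) \<le> (\<integral>d. R (kt d) d + 2 * D d \<partial>M)"
  proof (rule integral_mono)
    fix d assume "d \<in> space M"
    then show "R (kh d) d \<le> R (kt d) d + 2 * D d"
      using range[of d] minimizer[of d "kt d"] deviation[of "kh d" d] deviation[of "kt d" d] by auto
  qed (use assms(1-3) in auto)
  also have "\<dots> = (\<integral>d. R (kt d) d \<partial>M) + 2 * (\<integral>d. D d \<partial>M)"
    using assms(2,3) by auto
  finally show ?thesis .
qed

lemma pinball_in_interval:
  assumes "0 \<le> \<alpha>" and "\<alpha> \<le> 1"
  shows "pinball \<alpha> \<psi> z \<in> {0..\<bar>snd z - \<psi> (fst z)\<bar>}"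
  using assms mult_left_le_one_le[of "\<bar>snd z - \<psi> (fst z)\<bar>" \<alpha>]
    mult_left_le_one_le[of "\<bar>snd z - \<psi> (fst z)\<bar>" "1 - \<alpha>"]
  by (cases z) (auto simp: pinball_def)

lemma measurable_pinball:
  fixes h :: "'i \<Rightarrow> 'x \<Rightarrow> real" and P0 :: "('x \<times> real) measure"
  assumes P0: "sets P0 = sets (XM \<Otimes>\<^sub>M borel)"
    and h: "(\<lambda>(d, x). h d x) \<in> borel_measurable (N \<Otimes>\<^sub>M XM)"
  shows "(\<lambda>(d, z). pinball \<alpha> (h d) z) \<in> borel_measurable (N \<Otimes>\<^sub>M P0)"
proof -
  have [measurable]: "fst \<in> measurable P0 XM" "snd \<in> borel_measurable P0"
    by (simp_all add: measurable_cong_sets[OF P0 refl])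
  have "(\<lambda>w. (fst w, fst (snd w))) \<in> measurable (N \<Otimes>\<^sub>M P0) (N \<Otimes>\<^sub>M XM)"
    by measurable
  from measurable_comp[OF this h]
  have [measurable]: "(\<lambda>w. h (fst w) (fst (snd w))) \<in> borel_measurable (N \<Otimes>\<^sub>M P0)"
    by (simp add: comp_def)
  have "(\<lambda>w. if snd (snd w) > h (fst w) (fst (snd w)) then \<alpha> * \<bar>snd (snd w) - h (fst w) (fst (snd w))\<bar>
            else (1 - \<alpha>) * \<bar>snd (snd w) - h (fst w) (fst (snd w))\<bar>) \<in> borel_measurable (N \<Otimes>\<^sub>M P0)"
    by measurable
  then show ?thesis by (simp add: pinball_def split_beta')
qed

lemma nonneg_of_AE_abs_le:
  fixes f :: "'a \<Rightarrow> real"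
  assumes "prob_space M" and "AE z in M. \<bar>f z\<bar> \<le> c"
  shows "0 \<le> c"
proof -
  have "AE z in M. 0 \<le> c"
    using assms(2) by (rule eventually_mono) auto
  then show ?thesis
    using prob_space.AE_const[OF assms(1)] by simp
qed

lemma pinball_bounded:
  assumes "0 \<le> \<alpha>" and "\<alpha> \<le> 1" and "\<bar>snd z\<bar> \<le> C" and "\<bar>\<psi> (fst z)\<bar> \<le> C"
  shows "pinball \<alpha> \<psi> z \<in> {0..2 * C}"
  using pinball_in_interval[OF assms(1,2), of \<psi> z] assms(3,4) by auto

locale cv_setting =
  fixes XM :: "'x measure" and P0 :: "('x \<times> real) measure" and \<alpha> C0 :: real
    and B :: "nat set pmf" and n :: nat
  assumes alpha: "0 \<le> \<alpha>" "\<alpha> \<le> 1"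
    and prob_space_P0: "prob_space P0" and sets_P0: "sets P0 = sets (XM \<Otimes>\<^sub>M borel)"
    and Y_bounded: "AE z in P0. \<bar>snd z\<bar> \<le> C0"
    and test_sets: "\<And>S. S \<in> set_pmf B \<Longrightarrow> S \<subseteq> {..<n}"
begin

abbreviation \<Omega> :: "(nat \<Rightarrow> 'x \<times> real) measure" where
  "\<Omega> \<equiv> PiM {..<n} (\<lambda>_. P0)"

definition admissible :: "(('x \<times> real) multiset \<Rightarrow> 'x \<Rightarrow> real) \<Rightarrow> bool" where
  "admissible \<psi> \<longleftrightarrow> (\<forall>D x. \<bar>\<psi> D x\<bar> \<le> C0) \<and>
     (\<forall>S :: nat set. finite S \<longrightarrow>
        (\<lambda>(d, x). \<psi> (image_mset d (mset_set S)) x) \<in> borel_measurable (PiM S (\<lambda>_. P0) \<Otimes>\<^sub>M XM))"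

definition split_loss ::
  "(('x \<times> real) multiset \<Rightarrow> 'x \<Rightarrow> real) \<Rightarrow> nat set \<Rightarrow> (nat \<Rightarrow> 'x \<times> real) \<Rightarrow> 'x \<times> real \<Rightarrow> real" where
  "split_loss \<psi> S d = pinball \<alpha> (\<psi> (train_ms n d S))"

lemma prob_space_\<Omega>: "prob_space \<Omega>"
  by (intro prob_space_PiM prob_space_P0)

lemma C0_nonneg: "0 \<le> C0"
  by (rule nonneg_of_AE_abs_le[OF prob_space_P0 Y_bounded])

lemma finite_set_pmf_B: "finite (set_pmf B)"
  using test_sets by (meson Pow_iff finite_Pow_iff finite_lessThan finite_subset subsetI)

lemma split_loss_restrict: "split_loss \<psi> S (restrict d ({..<n} - S)) = split_loss \<psi> S d"
  unfolding split_loss_def train_ms_def by (intro arg_cong[where f = "\<lambda>D. pinball \<alpha> (\<psi> D)"] image_mset_cong) auto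

lemma measurable_split_loss:
  assumes "admissible \<psi>"
  shows "(\<lambda>(x, z). split_loss \<psi> S x z) \<in> borel_measurable (PiM ({..<n} - S) (\<lambda>_. P0) \<Otimes>\<^sub>M P0)"
  using assms measurable_pinball[OF sets_P0, of "\<lambda>x. \<psi> (image_mset x (mset_set ({..<n} - S)))"]
  unfolding admissible_def split_loss_def train_ms_def by simp

lemma split_loss_bounded:
  assumes "admissible \<psi>" and "\<bar>snd z\<bar> \<le> C0"
  shows "split_loss \<psi> S d z \<in> {0..2 * C0}"
  using assms unfolding admissible_def split_loss_def by (intro pinball_bounded alpha) auto

lemma oracle_cv_risk_eq_sum:
  "oracle_cv_risk P0 \<alpha> B n \<psi> d = (\<Sum>S\<in>set_pmf B. pmf B S * (\<integral>z. split_loss \<psi> S d z \<partial>P0))"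
  unfolding oracle_cv_risk_def split_loss_def
  by (subst integral_measure_pmf[OF finite_set_pmf_B]) simp_all

lemma emp_cv_risk_minus_oracle_cv_risk:
  "emp_cv_risk \<alpha> B n \<psi> d - oracle_cv_risk P0 \<alpha> B n \<psi> d
     = (\<Sum>S\<in>set_pmf B. pmf B S * test_deviation P0 {..<n} S (split_loss \<psi> S) d)"
proof -
  have "emp_cv_risk \<alpha> B n \<psi> d = (\<Sum>S\<in>set_pmf B. pmf B S * ((\<Sum>i\<in>S. split_loss \<psi> S d (d i)) / card S))"
    unfolding emp_cv_risk_def split_loss_def
    by (subst integral_measure_pmf[OF finite_set_pmf_B]) simp_all
  then show ?thesis
    unfolding oracle_cv_risk_eq_sum test_deviation_def split_loss_restrict
    by (simp add: sum_subtractf[symmetric] right_diff_distrib)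
qed

lemma oracle_cv_risk_in_interval:
  assumes "admissible \<psi>"
  shows "oracle_cv_risk P0 \<alpha> B n \<psi> d \<in> {0..2 * C0}"
proof -
  have "(\<integral>z. split_loss \<psi> S d z \<partial>P0) \<in> {0..2 * C0}" for S
    using Y_bounded split_loss_bounded[OF assms] C0_nonneg
    by (intro integral_in_interval[OF prob_space_P0]) (auto elim!: eventually_mono)
  then show ?thesis
    unfolding oracle_cv_risk_def split_loss_def using C0_nonneg
    by (intro integral_in_interval[OF measure_pmf.prob_space_axioms]) auto
qed

lemma borel_measurable_oracle_cv_risk:
  assumes "admissible \<psi>"
  shows "oracle_cv_risk P0 \<alpha> B n \<psi> \<in> borel_measurable \<Omega>"
proof -
  have "(\<lambda>d. \<integral>z. split_loss \<psi> S d z \<partial>P0) \<in> borel_measurable \<Omega>" for S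
    using borel_measurable_integral_restrict[OF prob_space_P0 _ measurable_split_loss[OF assms, of S]]
    by (simp add: split_loss_restrict)
  then show ?thesis
    unfolding oracle_cv_risk_eq_sum[abs_def] by measurable
qed

lemma integrable_oracle_cv_risk_select:
  fixes alg :: "'k::countable \<Rightarrow> ('x \<times> real) multiset \<Rightarrow> 'x \<Rightarrow> real"
  assumes \<kappa>: "\<kappa> \<in> measurable \<Omega> (count_space UNIV)" and range: "\<And>d. d \<in> space \<Omega> \<Longrightarrow> \<kappa> d \<in> Ks"
    and admissible: "\<And>k. k \<in> Ks \<Longrightarrow> admissible (alg k)"
  shows "integrable \<Omega> (\<lambda>d. oracle_cv_risk P0 \<alpha> B n (alg (\<kappa> d)) d)"
proof (rule finite_measure.integrable_const_bound[OF prob_space.finite_measure[OF prob_space_\<Omega>]])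
  have "\<kappa> \<in> measurable \<Omega> (count_space Ks)"
    using \<kappa> range unfolding measurable_count_space_eq2_countable
    by (auto intro: measurable_sets[OF \<kappa>])
  then show "(\<lambda>d. oracle_cv_risk P0 \<alpha> B n (alg (\<kappa> d)) d) \<in> borel_measurable \<Omega>"
    using measurable_compose_countable'[where f = "\<lambda>k. oracle_cv_risk P0 \<alpha> B n (alg k)" and I = Ks]
      borel_measurable_oracle_cv_risk[OF admissible] by blast
  show "AE d in \<Omega>. norm (oracle_cv_risk P0 \<alpha> B n (alg (\<kappa> d)) d) \<le> 2 * C0"
    using oracle_cv_risk_in_interval[OF admissible] range by (auto intro!: AE_I2)
qed

definition max_cv_deviation ::
  "('k \<Rightarrow> ('x \<times> real) multiset \<Rightarrow> 'x \<Rightarrow> real) \<Rightarrow> 'k set \<Rightarrow> (nat \<Rightarrow> 'x \<times> real) \<Rightarrow> real" where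
  "max_cv_deviation alg Ks d = (\<Sum>S\<in>set_pmf B. pmf B S *
     Max ((\<lambda>k. \<bar>test_deviation P0 {..<n} S (split_loss (alg k) S) d\<bar>) ` Ks))"

lemma cv_risk_deviation_le_max_cv_deviation:
  assumes "finite Ks" and "k \<in> Ks"
  shows "\<bar>emp_cv_risk \<alpha> B n (alg k) d - oracle_cv_risk P0 \<alpha> B n (alg k) d\<bar> \<le> max_cv_deviation alg Ks d"
  unfolding emp_cv_risk_minus_oracle_cv_risk max_cv_deviation_def
  using assms by (intro order.trans[OF sum_abs] sum_mono) (auto simp: abs_mult intro!: mult_left_mono Max_ge)

lemma integrable_max_cv_deviation:
  assumes "finite Ks" and "Ks \<noteq> {}" and admissible: "\<And>k. k \<in> Ks \<Longrightarrow> admissible (alg k)"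
  shows "integrable \<Omega> (max_cv_deviation alg Ks)"
proof -
  have "split_loss (alg k) S x z \<in> {0..2 * C0 + 1}" if "k \<in> Ks" and "\<bar>snd z\<bar> \<le> C0" for k S x z
    using split_loss_bounded[OF admissible[OF that(1)] that(2), of S x] by simp
  then have "integrable \<Omega> (\<lambda>d. Max ((\<lambda>k. \<bar>test_deviation P0 {..<n} S (split_loss (alg k) S) d\<bar>) ` Ks))"
    if "S \<in> set_pmf B" for S
    using C0_nonneg by (intro integrable_Max_test_deviation[where b = "2 * C0 + 1", OF prob_space_P0 _ test_sets[OF that] assms(1,2)
        measurable_split_loss[OF admissible] Y_bounded]) auto
  then show ?thesis
    unfolding max_cv_deviation_def[abs_def] by (intro Bochner_Integration.integrable_sum integrable_mult_right)
qed

(* The losses lie in [0, 2 C0]; Hoeffding's inequality is applied with the range bound 2 C0 + 1,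
   which stays positive when C0 = 0. *)
lemma integral_max_cv_deviation_le:
  fixes m t :: real
  assumes "finite Ks" and "Ks \<noteq> {}" and admissible: "\<And>k. k \<in> Ks \<Longrightarrow> admissible (alg k)"
    and card_test: "\<And>S. S \<in> set_pmf B \<Longrightarrow> m \<le> card S" and "0 \<le> t"
  shows "(\<integral>d. max_cv_deviation alg Ks d \<partial>\<Omega>)
      \<le> t + (2 * C0 + 1) * card Ks * (2 * exp (-2 * m * t\<^sup>2 / (2 * C0 + 1)\<^sup>2))"
    (is "_ \<le> ?bound")
proof -
  have "0 < 2 * C0 + 1"
    using C0_nonneg by simp
  have loss_bounded: "split_loss (alg k) S x z \<in> {0..2 * C0 + 1}"
    if "k \<in> Ks" and "\<bar>snd z\<bar> \<le> C0" for k S x z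
    using split_loss_bounded[OF admissible[OF that(1)] that(2), of S x] by simp
  have Max_int: "integrable \<Omega> (\<lambda>d. Max ((\<lambda>k. \<bar>test_deviation P0 {..<n} S (split_loss (alg k) S) d\<bar>) ` Ks))"
    if "S \<in> set_pmf B" for S
    by (rule integrable_Max_test_deviation[OF prob_space_P0 _ test_sets[OF that] assms(1,2)
          measurable_split_loss[OF admissible] Y_bounded loss_bounded])
      (use \<open>0 < 2 * C0 + 1\<close> in auto)
  have Max_le: "(\<integral>d. Max ((\<lambda>k. \<bar>test_deviation P0 {..<n} S (split_loss (alg k) S) d\<bar>) ` Ks) \<partial>\<Omega>) \<le> ?bound"
    if "S \<in> set_pmf B" for S
    by (rule integral_Max_test_deviation_le[OF prob_space_P0 _ test_sets[OF that] assms(1,2)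
          measurable_split_loss[OF admissible] Y_bounded loss_bounded \<open>0 < 2 * C0 + 1\<close> \<open>0 \<le> t\<close>
          card_test[OF that]]) auto
  have "(\<integral>d. max_cv_deviation alg Ks d \<partial>\<Omega>) = (\<Sum>S\<in>set_pmf B. pmf B S *
      (\<integral>d. Max ((\<lambda>k. \<bar>test_deviation P0 {..<n} S (split_loss (alg k) S) d\<bar>) ` Ks) \<partial>\<Omega>))"
    unfolding max_cv_deviation_def using Max_int by (subst Bochner_Integration.integral_sum) auto
  also have "\<dots> \<le> (\<Sum>S\<in>set_pmf B. pmf B S * ?bound)"
    using Max_le by (intro sum_mono mult_left_mono) auto
  also have "\<dots> = ?bound"
    using sum_pmf_eq_1[OF finite_set_pmf_B] by (simp add: sum_distrib_right[symmetric])
  finally show ?thesis .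
qed

lemma integral_excess_oracle_cv_risk_of_empirical_selector_le:
  fixes alg :: "'k::countable \<Rightarrow> ('x \<times> real) multiset \<Rightarrow> 'x \<Rightarrow> real" and m t c :: real
  assumes "finite Ks" and admissible: "\<And>k. k \<in> Ks \<Longrightarrow> admissible (alg k)"
    and card_test: "\<And>S. S \<in> set_pmf B \<Longrightarrow> m \<le> card S"
    and kh: "kh \<in> measurable \<Omega> (count_space UNIV)" and kt: "kt \<in> measurable \<Omega> (count_space UNIV)"
    and range: "\<And>d. d \<in> space \<Omega> \<Longrightarrow> kh d \<in> Ks \<and> kt d \<in> Ks"
    and minimizer: "\<And>d k. d \<in> space \<Omega> \<Longrightarrow> k \<in> Ks \<Longrightarrow>
          emp_cv_risk \<alpha> B n (alg (kh d)) d \<le> emp_cv_risk \<alpha> B n (alg k) d"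
    and "0 \<le> t"
  shows "(\<integral>d. oracle_cv_risk P0 \<alpha> B n (alg (kh d)) d - c \<partial>\<Omega>)
      \<le> (\<integral>d. oracle_cv_risk P0 \<alpha> B n (alg (kt d)) d - c \<partial>\<Omega>)
         + 2 * (t + (2 * C0 + 1) * card Ks * (2 * exp (-2 * m * t\<^sup>2 / (2 * C0 + 1)\<^sup>2)))"
proof -
  interpret \<Omega>: prob_space \<Omega> by (rule prob_space_\<Omega>)
  obtain d0 where "d0 \<in> space \<Omega>" using \<Omega>.not_empty by blast
  then have "Ks \<noteq> {}" using range by blast
  have int_h: "integrable \<Omega> (\<lambda>d. oracle_cv_risk P0 \<alpha> B n (alg (kh d)) d)"
    using range by (intro integrable_oracle_cv_risk_select[OF kh _ admissible]) auto
  have int_t: "integrable \<Omega> (\<lambda>d. oracle_cv_risk P0 \<alpha> B n (alg (kt d)) d)"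
    using range by (intro integrable_oracle_cv_risk_select[OF kt _ admissible]) auto
  have "(\<integral>d. oracle_cv_risk P0 \<alpha> B n (alg (kh d)) d \<partial>\<Omega>)
      \<le> (\<integral>d. oracle_cv_risk P0 \<alpha> B n (alg (kt d)) d \<partial>\<Omega>) + 2 * (\<integral>d. max_cv_deviation alg Ks d \<partial>\<Omega>)"
    using cv_risk_deviation_le_max_cv_deviation[OF \<open>finite Ks\<close>]
    by (intro integral_risk_of_empirical_minimizer_le[where R = "\<lambda>k. oracle_cv_risk P0 \<alpha> B n (alg k)"
          and Rh = "\<lambda>k. emp_cv_risk \<alpha> B n (alg k)", OF int_h int_t _ range minimizer]
        integrable_max_cv_deviation[OF \<open>finite Ks\<close> \<open>Ks \<noteq> {}\<close> admissible])
  moreover have "(\<integral>d. max_cv_deviation alg Ks d \<partial>\<Omega>)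
      \<le> t + (2 * C0 + 1) * card Ks * (2 * exp (-2 * m * t\<^sup>2 / (2 * C0 + 1)\<^sup>2))"
    by (rule integral_max_cv_deviation_le[where alg = alg, OF \<open>finite Ks\<close> \<open>Ks \<noteq> {}\<close> admissible card_test \<open>0 \<le> t\<close>])
  moreover have "(\<integral>d. oracle_cv_risk P0 \<alpha> B n (alg (\<kappa> d)) d - c \<partial>\<Omega>)
      = (\<integral>d. oracle_cv_risk P0 \<alpha> B n (alg (\<kappa> d)) d \<partial>\<Omega>) - c"
    if "integrable \<Omega> (\<lambda>d. oracle_cv_risk P0 \<alpha> B n (alg (\<kappa> d)) d)" for \<kappa>
    using that by (simp add: \<Omega>.prob_space)
  ultimately show ?thesis
    using int_h int_t by simp
qed

end

lemma eventually_ln_le_of_bigo_powr: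
  fixes K :: "nat \<Rightarrow> nat" and a :: real
  assumes "0 \<le> a" and "(\<lambda>n. real (K n)) \<in> O(\<lambda>n. real n powr a)"
  shows "eventually (\<lambda>n. ln (2 * (real (K n) + 1) * n) \<le> (a + 2) * ln n) at_top"
proof -
  obtain c where "c > 0" and K: "eventually (\<lambda>n. real (K n) \<le> c * real n powr a) at_top"
    using assms(2) by (auto elim!: landau_o.bigE)
  have large: "eventually (\<lambda>n. 2 * (c + 1) \<le> real n) at_top"
    by real_asymp
  show ?thesis
    using K large eventually_gt_at_top[of 0]
  proof eventually_elim
    case (elim n)
    have "1 \<le> real n powr a"
      using elim(2,3) \<open>0 < c\<close> \<open>0 \<le> a\<close> by (intro ge_one_powr_ge_zero) auto
    then have "2 * (real (K n) + 1) * n \<le> 2 * (c + 1) * real n powr a * n"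
      using elim(1,3) by (intro mult_right_mono) (auto simp: algebra_simps)
    also have "\<dots> \<le> real n * real n powr a * n"
      using elim(2) by (intro mult_right_mono) auto
    finally have "ln (2 * (real (K n) + 1) * n) \<le> ln (real n * real n powr a * n)"
      using elim(3) by (subst ln_le_cancel_iff) auto
    also have "\<dots> = (a + 2) * ln n"
      using elim(3) by (simp add: ln_mult ln_powr algebra_simps)
    finally show ?case .
  qed
qed

lemma ln_two_mult_Suc_mult_nonneg: "0 \<le> ln (2 * (real k + 1) * real n)"
proof (cases "n = 0")
  case False
  have "(1::real) \<le> 2 * (real k + 1)" by simp
  also have "\<dots> \<le> 2 * (real k + 1) * n" using False by simp
  finally show ?thesis by simp
qed simp

(* tau n is chosen so that, once p n >= 2, the second summand equals b K n / ((K n + 1) n) <= b / n;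
   the max only keeps the radicand nonnegative for small n. *)
lemma Hoeffding_union_bound_bigo:
  fixes K :: "nat \<Rightarrow> nat" and a p b :: real
  assumes "0 \<le> a" and "0 < p" and "0 < b" and K: "(\<lambda>n. real (K n)) \<in> O(\<lambda>n. real n powr a)"
  defines "\<tau> n \<equiv> b * sqrt (ln (2 * (real (K n) + 1) * n) / (2 * max 1 (p * n - 1)))"
  shows "(\<lambda>n. \<tau> n + b * K n * (2 * exp (-2 * (p * n - 1) * (\<tau> n)\<^sup>2 / b\<^sup>2))) \<in> O(\<lambda>n. ln n / sqrt n)"
proof (rule sum_in_bigo)
  have large: "eventually (\<lambda>n::nat. 2 \<le> p * n) at_top"
    using \<open>0 < p\<close> by real_asymp
  have "eventually (\<lambda>n. norm (\<tau> n) \<le> b * sqrt ((a + 2) / p) * norm (sqrt (ln n / n))) at_top"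
    using large eventually_ln_le_of_bigo_powr[OF \<open>0 \<le> a\<close> K] eventually_gt_at_top[of 0]
  proof eventually_elim
    case (elim n)
    let ?L = "ln (2 * (real (K n) + 1) * n)"
    have "0 \<le> ?L"
      by (rule ln_two_mult_Suc_mult_nonneg)
    moreover have "?L / (2 * max 1 (p * n - 1)) \<le> ((a + 2) / p) * (ln n / n)"
    proof -
      have "?L / (2 * max 1 (p * n - 1)) \<le> (a + 2) * ln n / (p * n)"
        using elim \<open>0 < p\<close> \<open>0 \<le> a\<close> by (intro frac_le) auto
      then show ?thesis by simp
    qed
    ultimately have "sqrt (?L / (2 * max 1 (p * n - 1))) \<le> sqrt ((a + 2) / p) * sqrt (ln n / n)"
      by (metis real_sqrt_le_iff real_sqrt_mult)
    then show ?case
      using \<open>0 < b\<close> \<open>0 \<le> ?L\<close> elim(3) unfolding \<tau>_def by (simp add: abs_mult)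
  qed
  then have "\<tau> \<in> O(\<lambda>n. sqrt (ln n / n))"
    by (rule bigoI)
  also have "(\<lambda>n. sqrt (ln n / n)) \<in> O(\<lambda>n::nat. ln n / sqrt n)"
    by real_asymp
  finally show "\<tau> \<in> O(\<lambda>n. ln n / sqrt n)" .
  have "eventually (\<lambda>n. norm (b * K n * (2 * exp (-2 * (p * n - 1) * (\<tau> n)\<^sup>2 / b\<^sup>2))) \<le> b * norm (1 / real n)) at_top"
    using large eventually_gt_at_top[of 0]
  proof eventually_elim
    case (elim n)
    let ?N = "2 * (real (K n) + 1) * n"
    have "0 < ?N"
      using elim(2) by simp
    have "-2 * (p * n - 1) * (\<tau> n)\<^sup>2 / b\<^sup>2 = - ln ?N"
      using elim(1) \<open>0 < b\<close> ln_two_mult_Suc_mult_nonneg[of "K n" n] unfolding \<tau>_def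
      by (simp add: power_mult_distrib field_simps)
    then have "b * K n * (2 * exp (-2 * (p * n - 1) * (\<tau> n)\<^sup>2 / b\<^sup>2)) = b * (K n / (K n + 1)) / n"
      using \<open>0 < ?N\<close> by (simp add: exp_minus field_simps)
    also have "\<dots> \<le> b / n"
      using \<open>0 < b\<close> by (intro divide_right_mono mult_left_le) auto
    finally show ?case
      using \<open>0 < b\<close> by simp
  qed
  then have "(\<lambda>n. b * K n * (2 * exp (-2 * (p * n - 1) * (\<tau> n)\<^sup>2 / b\<^sup>2))) \<in> O(\<lambda>n. 1 / n)"
    by (rule bigoI)
  also have "(\<lambda>n. 1 / n) \<in> O(\<lambda>n::nat. ln n / sqrt n)"
    by real_asymp
  finally show "(\<lambda>n. b * K n * (2 * exp (-2 * (p * n - 1) * (\<tau> n)\<^sup>2 / b\<^sup>2))) \<in> O(\<lambda>n. ln n / sqrt n)" .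
qed

theorem theorem1:
  fixes XM :: "'x measure"
    and P0 :: "('x \<times> real) measure"
    and Kx :: "'x \<Rightarrow> real measure"
    and psi0 :: "'x \<Rightarrow> real"
    and \<alpha> C0 p a :: real
    and Bn :: "nat \<Rightarrow> nat set pmf"
    and K :: "nat \<Rightarrow> nat"
    and alg :: "nat \<Rightarrow> nat \<Rightarrow> ('x \<times> real) multiset \<Rightarrow> 'x \<Rightarrow> real"
  assumes alpha: "0 < \<alpha>" "\<alpha> < 1"
    and P0: "prob_space P0" "sets P0 = sets (XM \<Otimes>\<^sub>M borel)"
    and Kx_kernel: "Kx \<in> XM \<rightarrow>\<^sub>M prob_algebra borel"
    and Kx_disint: "\<forall>A\<in>sets XM. \<forall>B\<in>sets borel.
        emeasure P0 (A \<times> B) = (\<integral>\<^sup>+x. indicator A x * emeasure (Kx x) B \<partial>(distr P0 XM fst))"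
    and psi0_meas: "psi0 \<in> borel_measurable XM"
    and quantile_unique: "AE x in distr P0 XM fst. quantile_set \<alpha> (Kx x) = {psi0 x}"
    and Y_bounded: "AE z in P0. \<bar>snd z\<bar> \<le> C0"
    and p: "0 < p" "p < 1"
    and Bn: "\<forall>n. \<forall>S\<in>set_pmf (Bn n). S \<subseteq> {..<n} \<and> \<bar>real (card S) - p * real n\<bar> \<le> 1"
    and a: "a > 0"
    and K_growth: "(\<lambda>n. real (K n)) \<in> O(\<lambda>n. real n powr a)"
    and alg_bounded: "\<forall>n k D x. k \<in> {1..K n} \<longrightarrow> \<bar>alg n k D x\<bar> \<le> C0"
    and alg_meas: "\<forall>n k (S::nat set). k \<in> {1..K n} \<longrightarrow> finite S \<longrightarrow>
        (\<lambda>(d, x). alg n k (image_mset d (mset_set S)) x)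
          \<in> borel_measurable (PiM S (\<lambda>_. P0) \<Otimes>\<^sub>M XM)"
  shows "\<exists>r. r \<in> O(\<lambda>n. ln (real n) / sqrt (real n)) \<and>
    (\<forall>n \<kappa>h \<kappa>t.
       \<kappa>h \<in> measurable (PiM {..<n} (\<lambda>_. P0)) (count_space UNIV) \<longrightarrow>
       \<kappa>t \<in> measurable (PiM {..<n} (\<lambda>_. P0)) (count_space UNIV) \<longrightarrow>
       (\<forall>d\<in>space (PiM {..<n} (\<lambda>_. P0)). \<kappa>h d \<in> {1..K n} \<and>
          (\<forall>k\<in>{1..K n}. emp_cv_risk \<alpha> (Bn n) n (alg n (\<kappa>h d)) d
                          \<le> emp_cv_risk \<alpha> (Bn n) n (alg n k) d)) \<longrightarrow>
       (\<forall>d\<in>space (PiM {..<n} (\<lambda>_. P0)). \<kappa>t d \<in> {1..K n} \<and>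
          (\<forall>k\<in>{1..K n}. oracle_cv_risk P0 \<alpha> (Bn n) n (alg n (\<kappa>t d)) d
                          \<le> oracle_cv_risk P0 \<alpha> (Bn n) n (alg n k) d)) \<longrightarrow>
       (\<integral>d. oracle_cv_risk P0 \<alpha> (Bn n) n (alg n (\<kappa>h d)) d
              - (\<integral>z. pinball \<alpha> psi0 z \<partial>P0) \<partial>PiM {..<n} (\<lambda>_. P0))
       \<le> (\<integral>d. oracle_cv_risk P0 \<alpha> (Bn n) n (alg n (\<kappa>t d)) d
              - (\<integral>z. pinball \<alpha> psi0 z \<partial>P0) \<partial>PiM {..<n} (\<lambda>_. P0)) + r n)"
proof -
  define b where "b = 2 * C0 + 1"
  define \<tau> where "\<tau> n = b * sqrt (ln (2 * (real (K n) + 1) * n) / (2 * max 1 (p * n - 1)))" for n :: nat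
  define r where "r n = 2 * (\<tau> n + b * K n * (2 * exp (-2 * (p * n - 1) * (\<tau> n)\<^sup>2 / b\<^sup>2)))" for n :: nat
  have "0 < b"
    using nonneg_of_AE_abs_le[OF P0(1) Y_bounded] by (simp add: b_def)
  have "(\<lambda>n. \<tau> n + b * K n * (2 * exp (-2 * (p * n - 1) * (\<tau> n)\<^sup>2 / b\<^sup>2))) \<in> O(\<lambda>n. ln n / sqrt n)"
    unfolding \<tau>_def by (rule Hoeffding_union_bound_bigo[OF less_imp_le[OF a] p(1) \<open>0 < b\<close> K_growth])
  then have r_bigo: "r \<in> O(\<lambda>n. ln n / sqrt n)"
    unfolding r_def by (subst landau_o.big.cmult_in_iff) simp_all
  have \<tau>_nonneg: "0 \<le> \<tau> n" for n
    unfolding \<tau>_def using \<open>0 < b\<close> ln_two_mult_Suc_mult_nonneg by simp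
  show ?thesis
    apply (intro exI[of _ r] conjI allI impI, fact r_bigo)
    subgoal premises prems for n \<kappa>h \<kappa>t
    proof -
      interpret cv_setting XM P0 \<alpha> C0 "Bn n" n
        using alpha Bn by (intro cv_setting.intro[OF _ _ P0 Y_bounded]) auto
      have admissible: "admissible (alg n k)" if "k \<in> {1..K n}" for k
        using that by (simp add: admissible_def alg_bounded alg_meas)
      have card_test: "p * n - 1 \<le> card S" if "S \<in> set_pmf (Bn n)" for S
        using Bn that by (fastforce simp: abs_le_iff)
      have range: "\<kappa>h d \<in> {1..K n} \<and> \<kappa>t d \<in> {1..K n}" if "d \<in> space \<Omega>" for d
        using prems(3,4) that by blast
      have minimizer: "emp_cv_risk \<alpha> (Bn n) n (alg n (\<kappa>h d)) d \<le> emp_cv_risk \<alpha> (Bn n) n (alg n k) d"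
        if "d \<in> space \<Omega>" and "k \<in> {1..K n}" for d k
        using prems(3) that by blast
      show ?thesis
        using integral_excess_oracle_cv_risk_of_empirical_selector_le[OF finite_atLeastAtMost admissible
            card_test prems(1,2) range minimizer \<tau>_nonneg, of "\<integral>z. pinball \<alpha> psi0 z \<partial>P0"]
        unfolding r_def b_def by simp
    qed
    done
qed

end
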